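(* Let $W$ be the set of words over the alphabet $\{c_1,c_2,t_{12}\}$ that arise as the skeleton (word of a compatible listing) of some finite bicoloured graph, and for $w\in W$ let $r_1(w),r_2(w),s(w)$ be the numbers of occurrences of $c_1$, $c_2$, $t_{12}$ in $w$. Then \[\sum_{w\in W}c_1^{r_1(w)}c_2^{r_2(w)}t_{12}^{s(w)}=\left(1-\frac{c_1}{1+c_1}-\frac{c_2}{1+c_2}-t_{12}\right)^{-1}.\]
   Context: A bicoloured graph is a triple $G=(V_1,V_2,E)$ with $V_1,V_2$ disjoint finite sets (an ordered bipartition, either possibly empty) and $E\subseteq V_1\times V_2$. View $G$ as a poset on $V_1\cup V_2$ with $u<w$ iff $u\in V_1$, $w\in V_2$ and $(u,w)\in E$; vertices of $V_1$ have level $1$ and vertices of $V_2$ have level $2$ (even if isolated). For a vertex $a$ let $D_a=\{x:x<a\}$, $U_a=\{x:x>a\}$. Write $a\mathrel{\top}b$ if neither of $D_a,D_b$ contains the other, and $a\mathrel{\bot}b$ if neither of $U_a,U_b$ contains the other. A top of a tangle is a set $A$ with $|A|\ge2$ that is a connected component of the graph with edges $\{a,b\}$ for $a\mathrel{\top}b$; a bottom of a tangle is defined likewise with $\bot$. A top $A$ and bottom $B$ are matched if there are distinct $a_1,a_2\in A$, $b_1,b_2\in B$ with $b_1<a_1$, $b_2<a_2$ and the pairs $\{a_1,a_2\},\{b_1,b_2\},\{b_1,a_2\},\{b_2,a_1\}$ incomparable; a tangle is a matched pair $(A,B)$ (then $A\subseteq V_2$, $B\subseteq V_1$). A clone set is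 a maximal set of vertices lying in no tangle, all in the same colour class and all having the same neighbourhood. The parts of $G$ are its clone sets and tangles. A compatible listing is an ordering $(X_1,\dots,X_m)$ of all parts such that for $a\in X_i\cap V_1$, $b\in X_j\cap V_2$ with $i\neq j$: $a<b$ iff $i<j$. Its word replaces each clone set in $V_1$ by $c_1$, each clone set in $V_2$ by $c_2$, and each tangle by $t_{12}$. *)

theory Defs
  imports "HOL-Analysis.Analysis"
begin

definition bc_less :: "'v set \<Rightarrow> 'v set \<Rightarrow> ('v \<times> 'v) set \<Rightarrow> 'v \<Rightarrow> 'v \<Rightarrow> bool" where
  "bc_less V1 V2 E u w \<longleftrightarrow> u \<in> V1 \<and> w \<in> V2 \<and> (u, w) \<in> E"

definition down_set :: "'v set \<Rightarrow> 'v set \<Rightarrow> ('v \<times> 'v) set \<Rightarrow> 'v \<Rightarrow> 'v set" where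
  "down_set V1 V2 E a = {x \<in> V1 \<union> V2. bc_less V1 V2 E x a}"

definition up_set :: "'v set \<Rightarrow> 'v set \<Rightarrow> ('v \<times> 'v) set \<Rightarrow> 'v \<Rightarrow> 'v set" where
  "up_set V1 V2 E a = {x \<in> V1 \<union> V2. bc_less V1 V2 E a x}"

definition top_rel :: "'v set \<Rightarrow> 'v set \<Rightarrow> ('v \<times> 'v) set \<Rightarrow> 'v \<Rightarrow> 'v \<Rightarrow> bool" where
  "top_rel V1 V2 E a b \<longleftrightarrow>
     \<not> down_set V1 V2 E a \<subseteq> down_set V1 V2 E b \<and> \<not> down_set V1 V2 E b \<subseteq> down_set V1 V2 E a"

definition bot_rel :: "'v set \<Rightarrow> 'v set \<Rightarrow> ('v \<times> 'v) set \<Rightarrow> 'v \<Rightarrow> 'v \<Rightarrow> bool" where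
  "bot_rel V1 V2 E a b \<longleftrightarrow>
     \<not> up_set V1 V2 E a \<subseteq> up_set V1 V2 E b \<and> \<not> up_set V1 V2 E b \<subseteq> up_set V1 V2 E a"

definition component :: "'v set \<Rightarrow> ('v \<Rightarrow> 'v \<Rightarrow> bool) \<Rightarrow> 'v \<Rightarrow> 'v set" where
  "component V R a = {b \<in> V. (a, b) \<in> ({(x, y). x \<in> V \<and> y \<in> V \<and> (R x y \<or> R y x)})\<^sup>*}"

definition is_top :: "'v set \<Rightarrow> 'v set \<Rightarrow> ('v \<times> 'v) set \<Rightarrow> 'v set \<Rightarrow> bool" where
  "is_top V1 V2 E A \<longleftrightarrow> card A \<ge> 2 \<and>
     (\<exists>a \<in> V1 \<union> V2. A = component (V1 \<union> V2) (top_rel V1 V2 E) a)"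

definition is_bottom :: "'v set \<Rightarrow> 'v set \<Rightarrow> ('v \<times> 'v) set \<Rightarrow> 'v set \<Rightarrow> bool" where
  "is_bottom V1 V2 E B \<longleftrightarrow> card B \<ge> 2 \<and>
     (\<exists>a \<in> V1 \<union> V2. B = component (V1 \<union> V2) (bot_rel V1 V2 E) a)"

definition incomparable :: "'v set \<Rightarrow> 'v set \<Rightarrow> ('v \<times> 'v) set \<Rightarrow> 'v \<Rightarrow> 'v \<Rightarrow> bool" where
  "incomparable V1 V2 E x y \<longleftrightarrow> x \<noteq> y \<and> \<not> bc_less V1 V2 E x y \<and> \<not> bc_less V1 V2 E y x"

definition matched :: "'v set \<Rightarrow> 'v set \<Rightarrow> ('v \<times> 'v) set \<Rightarrow> 'v set \<Rightarrow> 'v set \<Rightarrow> bool" where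
  "matched V1 V2 E A B \<longleftrightarrow>
     (\<exists>a1 \<in> A. \<exists>a2 \<in> A. \<exists>b1 \<in> B. \<exists>b2 \<in> B. a1 \<noteq> a2 \<and> b1 \<noteq> b2 \<and>
        bc_less V1 V2 E b1 a1 \<and> bc_less V1 V2 E b2 a2 \<and>
        incomparable V1 V2 E a1 a2 \<and> incomparable V1 V2 E b1 b2 \<and>
        incomparable V1 V2 E b1 a2 \<and> incomparable V1 V2 E b2 a1)"

definition tangles :: "'v set \<Rightarrow> 'v set \<Rightarrow> ('v \<times> 'v) set \<Rightarrow> ('v set \<times> 'v set) set" where
  "tangles V1 V2 E = {(A, B). is_top V1 V2 E A \<and> is_bottom V1 V2 E B \<and> matched V1 V2 E A B}"

definition tangle_vertices :: "'v set \<Rightarrow> 'v set \<Rightarrow> ('v \<times> 'v) set \<Rightarrow> 'v set" where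
  "tangle_vertices V1 V2 E = (\<Union>(A, B) \<in> tangles V1 V2 E. A \<union> B)"

definition nbhd :: "'v set \<Rightarrow> 'v set \<Rightarrow> ('v \<times> 'v) set \<Rightarrow> 'v \<Rightarrow> 'v set" where
  "nbhd V1 V2 E x = {y \<in> V1 \<union> V2. bc_less V1 V2 E x y \<or> bc_less V1 V2 E y x}"

definition clone_like :: "'v set \<Rightarrow> 'v set \<Rightarrow> ('v \<times> 'v) set \<Rightarrow> 'v set \<Rightarrow> bool" where
  "clone_like V1 V2 E X \<longleftrightarrow> X \<subseteq> (V1 \<union> V2) - tangle_vertices V1 V2 E \<and>
     (X \<subseteq> V1 \<or> X \<subseteq> V2) \<and> (\<forall>x \<in> X. \<forall>y \<in> X. nbhd V1 V2 E x = nbhd V1 V2 E y)"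

definition clone_set :: "'v set \<Rightarrow> 'v set \<Rightarrow> ('v \<times> 'v) set \<Rightarrow> 'v set \<Rightarrow> bool" where
  "clone_set V1 V2 E X \<longleftrightarrow> X \<noteq> {} \<and> clone_like V1 V2 E X \<and>
     (\<forall>Y. X \<subseteq> Y \<and> clone_like V1 V2 E Y \<longrightarrow> Y = X)"

datatype 'v part = Clone "'v set" | Tangle "'v set" "'v set"

fun part_verts :: "'v part \<Rightarrow> 'v set" where
  "part_verts (Clone X) = X"
| "part_verts (Tangle A B) = A \<union> B"

definition parts :: "'v set \<Rightarrow> 'v set \<Rightarrow> ('v \<times> 'v) set \<Rightarrow> 'v part set" where
  "parts V1 V2 E = Clone ` {X. clone_set V1 V2 E X} \<union> (\<lambda>(A, B). Tangle A B) ` tangles V1 V2 E"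

definition compatible_listing :: "'v set \<Rightarrow> 'v set \<Rightarrow> ('v \<times> 'v) set \<Rightarrow> 'v part list \<Rightarrow> bool" where
  "compatible_listing V1 V2 E Xs \<longleftrightarrow> distinct Xs \<and> set Xs = parts V1 V2 E \<and>
     (\<forall>i < length Xs. \<forall>j < length Xs. i \<noteq> j \<longrightarrow>
        (\<forall>a \<in> part_verts (Xs ! i) \<inter> V1. \<forall>b \<in> part_verts (Xs ! j) \<inter> V2.
           bc_less V1 V2 E a b \<longleftrightarrow> i < j))"

datatype letter = C1 | C2 | T12

fun part_letter :: "'v set \<Rightarrow> 'v part \<Rightarrow> letter" where
  "part_letter V1 (Clone X) = (if X \<subseteq> V1 then C1 else C2)"
| "part_letter V1 (Tangle A B) = T12"

text \<open>Skeleton words of finite bicoloured graphs (vertices w.l.o.g. natural numbers).\<close>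
definition skeleton_words :: "letter list set" where
  "skeleton_words = {w. \<exists>(V1 :: nat set) V2 E Xs. finite V1 \<and> finite V2 \<and> V1 \<inter> V2 = {} \<and>
      E \<subseteq> V1 \<times> V2 \<and> compatible_listing V1 V2 E Xs \<and> w = map (part_letter V1) Xs}"

end

theory Submission
  imports Defs
begin

text \<open>A word is a skeleton iff no two adjacent letters are the same clone letter. Two adjacent
  clone sets of one colour in a compatible listing have the same neighbourhood, so their union would
  be a larger clone set. Conversely a word without such repetitions is realised by a graph built
  block by block, a T12 block being a pair of crossing edges. Splitting these words by their first
  letter, the generating function F satisfies F = 1 + F1 + F2 + t F with F1 = c1 (F - F1) and
  F2 = c2 (F - F2), since a word starting with a clone letter continues with any admissible word
  not starting with that letter.\<close>

section \<open>Words without adjacent repeated clone letters\<close>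

lemma successively_iff_nth:
  "successively P xs \<longleftrightarrow> (\<forall>i. Suc i < length xs \<longrightarrow> P (xs ! i) (xs ! Suc i))"
proof (induction P xs rule: successively.induct)
  case (3 P x y xs)
  then show ?case
    by (auto simp: nth_Cons split: nat.splits)
qed auto

definition no_adjacent_clones :: "letter list \<Rightarrow> bool" where
  "no_adjacent_clones = successively (\<lambda>x y. x = y \<longrightarrow> x = T12)"

lemma no_adjacent_clones_Cons:
  "no_adjacent_clones (x # w) \<longleftrightarrow> no_adjacent_clones w \<and> (w \<noteq> [] \<longrightarrow> hd w = x \<longrightarrow> x = T12)"
  by (auto simp: no_adjacent_clones_def successively_Cons)

definition letter_weight :: "real \<Rightarrow> real \<Rightarrow> real \<Rightarrow> letter \<Rightarrow> real" where
  "letter_weight a b c x = (case x of C1 \<Rightarrow> a | C2 \<Rightarrow> b | T12 \<Rightarrow> c)"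

definition word_weight :: "real \<Rightarrow> real \<Rightarrow> real \<Rightarrow> letter list \<Rightarrow> real" where
  "word_weight a b c w = a ^ count_list w C1 * b ^ count_list w C2 * c ^ count_list w T12"

lemma word_weight_Nil [simp]: "word_weight a b c [] = 1"
  by (simp add: word_weight_def)

lemma word_weight_Cons: "word_weight a b c (x # w) = letter_weight a b c x * word_weight a b c w"
  by (cases x) (simp_all add: word_weight_def letter_weight_def)

lemma UNIV_letter: "(UNIV :: letter set) = {C1, C2, T12}"
  using letter.exhaust by auto

lemma finite_words_length_eq: "finite {w :: letter list. length w = n}"
proof -
  have "finite (UNIV :: letter set)" by (simp add: UNIV_letter)
  from finite_lists_length_eq[OF this, of n] show ?thesis by simp
qed

lemma sum_word_weight_length_eq:
  "(\<Sum>w | length w = n. word_weight a b c w) = (a + b + c) ^ n"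
proof (induction n)
  case 0
  have "{w :: letter list. length w = 0} = {[]}" by auto
  then show ?case by simp
next
  case (Suc n)
  have img: "{w :: letter list. length w = Suc n} = case_prod Cons ` (UNIV \<times> {w. length w = n})"
    by (auto simp: length_Suc_conv)
  have inj: "inj_on (case_prod Cons) (UNIV \<times> {w :: letter list. length w = n})"
    by (auto simp: inj_on_def)
  have "(\<Sum>w | length w = Suc n. word_weight a b c w)
      = (\<Sum>(x, w) \<in> UNIV \<times> {w. length w = n}. letter_weight a b c x * word_weight a b c w)"
    unfolding img by (subst sum.reindex[OF inj]) (simp add: word_weight_Cons case_prod_unfold)
  also have "\<dots> = (\<Sum>x\<in>UNIV. letter_weight a b c x) * (\<Sum>w | length w = n. word_weight a b c w)"
    by (simp add: sum_product sum.cartesian_product)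
  also have "(\<Sum>x\<in>UNIV. letter_weight a b c x) = a + b + c"
    by (simp add: UNIV_letter letter_weight_def)
  finally show ?case using Suc by simp
qed

lemma words_length_less_eq: "{w :: letter list. length w < N} = (\<Union>n<N. {w. length w = n})"
  by auto

lemma finite_words_length_less: "finite {w :: letter list. length w < N}"
  by (simp add: words_length_less_eq finite_words_length_eq)

lemma sum_word_weight_length_less:
  "(\<Sum>w | length w < N. word_weight a b c w) = (\<Sum>n<N. (a + b + c) ^ n)"
  unfolding words_length_less_eq
  by (subst sum.UNION_disjoint) (auto simp: finite_words_length_eq sum_word_weight_length_eq)

lemma nonneg_word_weight_summable_on:
  assumes "0 \<le> a" "0 \<le> b" "0 \<le> c" "a + b + c < 1"
  shows "word_weight a b c summable_on UNIV"
proof (rule nonneg_bdd_above_summable_on)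
  show "bdd_above (sum (word_weight a b c) ` {F. F \<subseteq> UNIV \<and> finite F})"
  proof (rule bdd_aboveI2)
    fix F :: "letter list set" assume "F \<in> {F. F \<subseteq> UNIV \<and> finite F}"
    then obtain N where F: "F \<subseteq> {w. length w < N}"
      by (metis (mono_tags) finite_maxlen mem_Collect_eq subsetI)
    have "sum (word_weight a b c) F \<le> (\<Sum>w | length w < N. word_weight a b c w)"
      using F assms by (intro sum_mono2) (auto simp: finite_words_length_less word_weight_def)
    also have "\<dots> = (\<Sum>n<N. (a + b + c) ^ n)"
      by (rule sum_word_weight_length_less)
    also have "\<dots> = (1 - (a + b + c) ^ N) / (1 - (a + b + c))"
      using assms by (simp add: sum_gp_strict)
    also have "\<dots> \<le> 1 / (1 - (a + b + c))"
      using assms by (intro divide_right_mono) auto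
    finally show "sum (word_weight a b c) F \<le> 1 / (1 - (a + b + c))" .
  qed
qed (use assms in \<open>simp add: word_weight_def\<close>)

lemma word_weight_summable_on:
  assumes "abs a + abs b + abs c < 1"
  shows "word_weight a b c summable_on A"
proof -
  have norm_eq: "(\<lambda>w. norm (word_weight a b c w)) = word_weight (abs a) (abs b) (abs c)"
    by (simp add: fun_eq_iff word_weight_def abs_mult power_abs)
  have "(\<lambda>w. norm (word_weight a b c w)) summable_on UNIV"
    unfolding norm_eq using assms by (intro nonneg_word_weight_summable_on) auto
  then have "word_weight a b c summable_on UNIV"
    by (rule abs_summable_summable)
  then show ?thesis
    by (rule summable_on_subset_banach) simp
qed

lemma has_sum_word_weight_Cons_image:
  "(word_weight a b c has_sum s) (Cons x ` A)
    \<longleftrightarrow> ((\<lambda>w. letter_weight a b c x * word_weight a b c w) has_sum s) A"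
  by (simp add: has_sum_reindex inj_on_def o_def word_weight_Cons)

definition starting_with :: "letter \<Rightarrow> letter list set" where
  "starting_with x = {w. no_adjacent_clones w \<and> w \<noteq> [] \<and> hd w = x}"

lemma starting_with_eq_Cons_image:
  "starting_with x = Cons x ` (if x = T12 then {w. no_adjacent_clones w}
     else {w. no_adjacent_clones w} - starting_with x)"
  by (auto simp: starting_with_def no_adjacent_clones_Cons neq_Nil_conv image_iff)

lemma no_adjacent_clones_split_first:
  "{w. no_adjacent_clones w} = insert [] (starting_with C1 \<union> starting_with C2 \<union> starting_with T12)"
  by (auto simp: starting_with_def no_adjacent_clones_def neq_Nil_conv intro: letter.exhaust)

lemma first_letter_equations_solution:
  fixes F G1 G2 G3 a b c :: real
  assumes "F = 1 + G1 + G2 + G3" "G1 = a * (F - G1)" "G2 = b * (F - G2)" "G3 = c * F"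
    and "1 + a \<noteq> 0" "1 + b \<noteq> 0"
  shows "F = 1 / (1 - a / (1 + a) - b / (1 + b) - c)"
proof -
  have "G1 * (1 + a) = F * a" "G2 * (1 + b) = F * b"
    using assms(2,3) by algebra+
  then have G: "G1 = F * (a / (1 + a))" "G2 = F * (b / (1 + b))"
    using assms(5,6) by (simp_all add: eq_divide_eq)
  have "F * (1 - a / (1 + a) - b / (1 + b) - c) = F - F * (a / (1 + a)) - F * (b / (1 + b)) - F * c"
    by (simp add: algebra_simps)
  also have "\<dots> = 1"
    using assms(1,4) G by (simp add: mult.commute)
  finally show ?thesis
    by (metis divide_eq_eq mult_eq_0_iff zero_neq_one)
qed

lemma has_sum_word_weight_no_adjacent_clones:
  assumes "\<bar>a\<bar> + \<bar>b\<bar> + \<bar>c\<bar> < 1"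
  shows "(word_weight a b c has_sum (1 / (1 - a / (1 + a) - b / (1 + b) - c)))
           {w. no_adjacent_clones w}"
proof -
  let ?f = "word_weight a b c" and ?S = "{w. no_adjacent_clones w}"
  define F where "F = infsum ?f ?S"
  define G where "G x = infsum ?f (starting_with x)" for x
  have has_F: "(?f has_sum F) ?S" and has_G: "(?f has_sum G x) (starting_with x)" for x
    using word_weight_summable_on[OF assms] by (simp_all add: F_def G_def)
  have G_eq: "G x = letter_weight a b c x * (if x = T12 then F else F - G x)" for x
  proof -
    define rest where "rest = (if x = T12 then ?S else ?S - starting_with x)"
    have "starting_with x = Cons x ` rest"
      unfolding rest_def by (rule starting_with_eq_Cons_image)
    then have "((\<lambda>w. letter_weight a b c x * ?f w) has_sum G x) rest"
      using has_G[of x] by (simp add: has_sum_word_weight_Cons_image)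
    moreover have "(?f has_sum (if x = T12 then F else F - G x)) rest"
      using has_F has_G[of x] by (auto intro: has_sum_Diff simp: rest_def starting_with_def)
    ultimately show ?thesis
      using has_sum_unique has_sum_cmult_right by blast
  qed
  have "(?f has_sum (?f [] + (G C1 + G C2 + G T12))) ?S"
    unfolding no_adjacent_clones_split_first
    by (intro has_sum_insert has_sum_Un_disjoint has_G) (auto simp: starting_with_def)
  then have "F = 1 + G C1 + G C2 + G T12"
    using has_F has_sum_unique by (metis add.assoc word_weight_Nil)
  moreover have "G C1 = a * (F - G C1)" "G C2 = b * (F - G C2)" "G T12 = c * F"
    using G_eq[of C1, unfolded letter_weight_def] G_eq[of C2, unfolded letter_weight_def]
      G_eq[of T12, unfolded letter_weight_def]
    by simp_all
  moreover have "1 + a \<noteq> 0" "1 + b \<noteq> 0"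
    using assms by auto
  ultimately have "F = 1 / (1 - a / (1 + a) - b / (1 + b) - c)"
    by (rule first_letter_equations_solution)
  then show ?thesis
    using has_F by simp
qed

section \<open>Skeletons have no adjacent repeated clone letters\<close>

lemma exists_part_containing:
  assumes "finite V1" "finite V2" "v \<in> V1 \<union> V2"
  shows "\<exists>P \<in> parts V1 V2 E. v \<in> part_verts P"
proof (cases "v \<in> tangle_vertices V1 V2 E")
  case True
  then obtain A B where "(A, B) \<in> tangles V1 V2 E" "v \<in> A \<union> B"
    by (auto simp: tangle_vertices_def)
  then show ?thesis
    by (intro bexI[of _ "Tangle A B"]) (auto simp: parts_def)
next
  case False
  define C where "C = {Y. v \<in> Y \<and> clone_like V1 V2 E Y}"
  have "C \<subseteq> Pow (V1 \<union> V2)"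
    by (auto simp: C_def clone_like_def)
  then have "finite C"
    using assms by (meson finite_Pow_iff finite_UnI finite_subset)
  moreover have "{v} \<in> C"
    using False assms by (auto simp: C_def clone_like_def)
  ultimately obtain X where "X \<in> C" "\<forall>Y \<in> C. X \<subseteq> Y \<longrightarrow> X = Y"
    using finite_has_maximal by (metis empty_iff)
  then have "clone_set V1 V2 E X" "v \<in> X"
    by (auto simp: clone_set_def C_def)
  then show ?thesis
    by (intro bexI[of _ "Clone X"]) (auto simp: parts_def)
qed

lemma clone_set_eq_if_union_clone_like:
  assumes "clone_set V1 V2 E X" "clone_set V1 V2 E Y" "clone_like V1 V2 E (X \<union> Y)"
  shows "X = Y"
  using assms unfolding clone_set_def by (metis Un_upper1 Un_upper2)

lemma clone_like_Un:
  assumes "clone_like V1 V2 E X" "clone_like V1 V2 E Y" "X \<union> Y \<subseteq> V1 \<or> X \<union> Y \<subseteq> V2"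
    and "\<And>x y. x \<in> X \<Longrightarrow> y \<in> Y \<Longrightarrow> nbhd V1 V2 E x = nbhd V1 V2 E y"
  shows "clone_like V1 V2 E (X \<union> Y)"
  using assms unfolding clone_like_def by (metis Un_iff Un_subset_iff)

lemma clone_sets_same_letter_same_colour:
  assumes "clone_set V1 V2 E X" "clone_set V1 V2 E Y"
    and "part_letter V1 (Clone X) = part_letter V1 (Clone Y)"
  shows "X \<union> Y \<subseteq> V1 \<or> X \<union> Y \<subseteq> V2"
  using assms by (auto simp: clone_set_def clone_like_def split: if_splits)

lemma compatible_listing_adjacent_nbhd_eq:
  assumes "finite V1" "finite V2" "V1 \<inter> V2 = {}" "compatible_listing V1 V2 E Xs"
    and "Suc i < length Xs"
    and colour: "part_verts (Xs ! i) \<union> part_verts (Xs ! Suc i) \<subseteq> V1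
      \<or> part_verts (Xs ! i) \<union> part_verts (Xs ! Suc i) \<subseteq> V2"
    and "x \<in> part_verts (Xs ! i)" "y \<in> part_verts (Xs ! Suc i)"
  shows "nbhd V1 V2 E x = nbhd V1 V2 E y"
proof -
  have order: "bc_less V1 V2 E a b \<longleftrightarrow> k < l"
    if "k < length Xs" "l < length Xs" "k \<noteq> l"
      "a \<in> part_verts (Xs ! k) \<inter> V1" "b \<in> part_verts (Xs ! l) \<inter> V2" for k l a b
    using assms(4) that unfolding compatible_listing_def by blast
  have "bc_less V1 V2 E x z \<or> bc_less V1 V2 E z x \<longleftrightarrow> bc_less V1 V2 E y z \<or> bc_less V1 V2 E z y"
    if z: "z \<in> V1 \<union> V2" for z
  proof -
    obtain P where "P \<in> parts V1 V2 E" "z \<in> part_verts P"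
      using exists_part_containing[OF assms(1,2) z] by blast
    then obtain j where j: "j < length Xs" "z \<in> part_verts (Xs ! j)"
      using assms(4) by (metis compatible_listing_def in_set_conv_nth)
    \<comment> \<open>a z of the other colour lies in neither part i nor part Suc i, so the listing
      compares it alike with x and y\<close>
    from colour show ?thesis
    proof
      assume "part_verts (Xs ! i) \<union> part_verts (Xs ! Suc i) \<subseteq> V1"
      then have "x \<in> V1" "y \<in> V1" "x \<notin> V2" "y \<notin> V2" "z \<in> V2 \<Longrightarrow> j \<noteq> i \<and> j \<noteq> Suc i"
        using assms(3,7,8) j by auto
      then show ?thesis
        using order[of i j x z] order[of "Suc i" j y z] assms(5,7,8) j
        by (cases "z \<in> V2") (auto simp: bc_less_def)
    next
      assume "part_verts (Xs ! i) \<union> part_verts (Xs ! Suc i) \<subseteq> V2"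
      then have "x \<in> V2" "y \<in> V2" "x \<notin> V1" "y \<notin> V1" "z \<in> V1 \<Longrightarrow> j \<noteq> i \<and> j \<noteq> Suc i"
        using assms(3,7,8) j by auto
      then show ?thesis
        using order[of j i z x] order[of j "Suc i" z y] assms(5,7,8) j
        by (cases "z \<in> V1") (auto simp: bc_less_def)
    qed
  qed
  then show ?thesis
    by (auto simp: nbhd_def)
qed

lemma compatible_listing_adjacent_letters:
  assumes "finite V1" "finite V2" "V1 \<inter> V2 = {}" and listing: "compatible_listing V1 V2 E Xs"
    and idx: "Suc i < length Xs"
    and same_letter: "part_letter V1 (Xs ! i) = part_letter V1 (Xs ! Suc i)"
  shows "part_letter V1 (Xs ! i) = T12"
proof (rule ccontr)
  assume "part_letter V1 (Xs ! i) \<noteq> T12"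
  then obtain X Y where X: "Xs ! i = Clone X" and Y: "Xs ! Suc i = Clone Y"
    using same_letter by (cases "Xs ! i"; cases "Xs ! Suc i") simp_all
  have "set Xs = parts V1 V2 E"
    using listing by (simp add: compatible_listing_def)
  then have "Xs ! i \<in> parts V1 V2 E" "Xs ! Suc i \<in> parts V1 V2 E"
    using idx by (metis Suc_lessD nth_mem)+
  then have clone: "clone_set V1 V2 E X" "clone_set V1 V2 E Y"
    using X Y by (auto simp: parts_def)
  have colour: "X \<union> Y \<subseteq> V1 \<or> X \<union> Y \<subseteq> V2"
    using clone_sets_same_letter_same_colour[OF clone] same_letter X Y by simp
  have "nbhd V1 V2 E x = nbhd V1 V2 E y" if "x \<in> X" "y \<in> Y" for x y
    using compatible_listing_adjacent_nbhd_eq[OF assms(1-4) idx] X Y colour that by simp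
  moreover have "clone_like V1 V2 E X" "clone_like V1 V2 E Y"
    using clone by (simp_all add: clone_set_def)
  ultimately have "clone_like V1 V2 E (X \<union> Y)"
    using colour by (intro clone_like_Un)
  then have "Xs ! i = Xs ! Suc i"
    using clone_set_eq_if_union_clone_like[OF clone] X Y by simp
  moreover have "distinct Xs"
    using listing by (simp add: compatible_listing_def)
  ultimately show False
    using idx by (simp add: nth_eq_iff_index_eq)
qed

lemma skeleton_word_no_adjacent_clones:
  assumes "w \<in> skeleton_words"
  shows "no_adjacent_clones w"
proof -
  obtain V1 V2 :: "nat set" and E Xs where "finite V1" "finite V2" "V1 \<inter> V2 = {}"
    and "compatible_listing V1 V2 E Xs" and w: "w = map (part_letter V1) Xs"
    using assms unfolding skeleton_words_def by blast
  then have "part_letter V1 (Xs ! i) = T12"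
    if "Suc i < length Xs" "part_letter V1 (Xs ! i) = part_letter V1 (Xs ! Suc i)" for i
    using compatible_listing_adjacent_letters that by blast
  then show ?thesis
    unfolding no_adjacent_clones_def successively_iff_nth w by simp
qed

section \<open>Realising a word by a bicoloured graph\<close>

lemma mem_component_cases:
  assumes "b \<in> component V R a"
    and "\<And>x y. R x y \<Longrightarrow> x \<in> S \<and> y \<in> S \<and> f x = f y"
  shows "b = a \<or> (a \<in> S \<and> b \<in> S \<and> f a = f b)"
proof -
  have "(a, b) \<in> {(x, y). x \<in> V \<and> y \<in> V \<and> (R x y \<or> R y x)}\<^sup>*"
    using assms(1) by (simp add: component_def)
  then show ?thesis
  proof (induction rule: rtrancl_induct)
    case (step y z)
    then have "R y z \<or> R z y"
      by simp
    then have "y \<in> S \<and> z \<in> S \<and> f y = f z"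
      using assms(2) by metis
    with step.IH show ?case
      by auto
  qed simp
qed

lemma component_subset: "component V R a \<subseteq> V"
  by (auto simp: component_def)

lemma related_in_component: "a \<in> V \<Longrightarrow> b \<in> V \<Longrightarrow> R a b \<Longrightarrow> b \<in> component V R a"
  by (auto simp: component_def)

lemma self_in_component: "a \<in> V \<Longrightarrow> a \<in> component V R a"
  by (simp add: component_def)

lemma component_eq_pair:
  assumes R: "\<And>x y. R x y \<Longrightarrow> x \<in> S \<and> y \<in> S \<and> f x = f y"
    and P: "\<And>x. x \<in> S \<Longrightarrow> x \<in> P (f x)" "\<And>k. card (P k) = 2"
    and two: "2 \<le> card (component V R a)"
  shows "component V R a = P (f a)"
proof -
  let ?C = "component V R a"
  have cases: "b = a \<or> (a \<in> S \<and> b \<in> S \<and> f a = f b)" if "b \<in> ?C" for b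
    using mem_component_cases[OF that R] .
  have "\<not> ?C \<subseteq> {a}"
  proof
    assume "?C \<subseteq> {a}"
    then have "card ?C \<le> 1"
      using card_mono[of "{a}"] by simp
    with two show False
      by simp
  qed
  then have "a \<in> S"
    using cases by blast
  then have "?C \<subseteq> P (f a)"
    using cases P(1) by (metis subsetI)
  moreover have "finite (P (f a))"
    using P(2)[of "f a"] card_ge_0_finite by force
  ultimately show ?thesis
    using two P(2) by (intro card_seteq) simp_all
qed

text \<open>The simplifier rewrites 4 i + 1 and 4 i + 2 into Suc-terms, whose div and mod by 4 it
  does not evaluate by itself.\<close>
lemma block_slot_simps [simp]:
  fixes i :: nat
  shows "Suc (4 * i) div 4 = i" "Suc (4 * i) mod 4 = 1"
    and "Suc (Suc (4 * i)) div 4 = i" "Suc (Suc (4 * i)) mod 4 = 2"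
    and "(4 * i + 3) div 4 = i" "(4 * i + 3) mod 4 = 3"
  by presburger+

text \<open>The graph realising a word w: vertex 4 i + k is slot k of block i, for the i-th letter.
  Slots 0, 1 are of colour 1 and slots 2, 3 of colour 2. A C1 block uses slot 0, a C2 block slot 2,
  and a T12 block all four slots, with 4 i < 4 i + 2 and 4 i + 1 < 4 i + 3 as its only inner
  relations; across blocks every vertex of colour 1 lies below every later vertex of colour 2.\<close>
locale word_realisation =
  fixes w :: "letter list"
begin

definition V1 :: "nat set" where
  "V1 = {v. v div 4 < length w \<and>
      (v mod 4 = 0 \<and> w ! (v div 4) \<noteq> C2 \<or> v mod 4 = 1 \<and> w ! (v div 4) = T12)}"

definition V2 :: "nat set" where
  "V2 = {v. v div 4 < length w \<and>
      (v mod 4 = 2 \<and> w ! (v div 4) \<noteq> C1 \<or> v mod 4 = 3 \<and> w ! (v div 4) = T12)}"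

definition E :: "(nat \<times> nat) set" where
  "E = {(u, v). u \<in> V1 \<and> v \<in> V2 \<and> (u div 4 < v div 4 \<or> v = u + 2)}"

definition lower_pair :: "nat \<Rightarrow> nat set" where
  "lower_pair i = {4 * i, 4 * i + 1}"

definition upper_pair :: "nat \<Rightarrow> nat set" where
  "upper_pair i = {4 * i + 2, 4 * i + 3}"

definition block_part :: "nat \<Rightarrow> nat part" where
  "block_part i = (case w ! i of
      C1 \<Rightarrow> Clone {4 * i}
    | C2 \<Rightarrow> Clone {4 * i + 2}
    | T12 \<Rightarrow> Tangle (upper_pair i) (lower_pair i))"

definition block_listing :: "nat part list" where
  "block_listing = map block_part [0..<length w]"

abbreviation below :: "nat \<Rightarrow> nat \<Rightarrow> bool" where
  "below \<equiv> bc_less V1 V2 E"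

lemma below_iff: "below u v \<longleftrightarrow> u \<in> V1 \<and> v \<in> V2 \<and> (u div 4 < v div 4 \<or> v = u + 2)"
  unfolding bc_less_def E_def by blast

lemma card_lower_pair [simp]: "card (lower_pair i) = 2"
  and card_upper_pair [simp]: "card (upper_pair i) = 2"
  by (simp_all add: lower_pair_def upper_pair_def)

lemma V1_in_lower_pair: "v \<in> V1 \<Longrightarrow> v \<in> lower_pair (v div 4)"
  unfolding V1_def lower_pair_def by auto presburger+

lemma V2_in_upper_pair: "v \<in> V2 \<Longrightarrow> v \<in> upper_pair (v div 4)"
  unfolding V2_def upper_pair_def by auto presburger+

lemma V1_V2_disjoint: "V1 \<inter> V2 = {}"
  by (auto simp: V1_def V2_def)

lemma vertex_block_less_length: "v \<in> V1 \<union> V2 \<Longrightarrow> v div 4 < length w"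
  by (auto simp: V1_def V2_def)

lemma finite_V1: "finite V1" and finite_V2: "finite V2"
proof -
  have "V1 \<subseteq> {..<4 * length w}" "V2 \<subseteq> {..<4 * length w}"
    by (auto simp: V1_def V2_def)
  then show "finite V1" "finite V2"
    by (auto intro: finite_subset)
qed

lemma finite_component: "finite (component (V1 \<union> V2) R a)"
  using finite_V1 finite_V2 by (simp add: finite_subset[OF component_subset])

lemma tangle_block_vertices:
  "i < length w \<Longrightarrow> w ! i = T12 \<Longrightarrow> lower_pair i \<subseteq> V1 \<and> upper_pair i \<subseteq> V2"
  by (auto simp: lower_pair_def upper_pair_def V1_def V2_def)

lemma V1_clone_block:
  assumes "v \<in> V1" "w ! (v div 4) \<noteq> T12"
  shows "w ! (v div 4) = C1 \<and> v = 4 * (v div 4)"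
proof -
  have "w ! (v div 4) = C1 \<and> v mod 4 = 0"
    using assms by (cases "w ! (v div 4)") (auto simp: V1_def)
  then show ?thesis
    using mult_div_mod_eq[of 4 v] by simp
qed

lemma V2_clone_block:
  assumes "v \<in> V2" "w ! (v div 4) \<noteq> T12"
  shows "w ! (v div 4) = C2 \<and> v = 4 * (v div 4) + 2"
proof -
  have "w ! (v div 4) = C2 \<and> v mod 4 = 2"
    using assms by (cases "w ! (v div 4)") (auto simp: V2_def)
  then show ?thesis
    using mult_div_mod_eq[of 4 v] by simp
qed

lemma below_imp_block_le: "below u v \<Longrightarrow> u div 4 \<le> v div 4"
  using V1_in_lower_pair[of u] by (auto simp: below_iff lower_pair_def)

lemma down_set_mono:
  assumes "a \<in> V2" "b \<in> V2" "a div 4 < b div 4"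
  shows "down_set V1 V2 E a \<subseteq> down_set V1 V2 E b"
  using assms below_imp_block_le by (fastforce simp: down_set_def below_iff)

lemma up_set_antimono:
  assumes "a \<in> V1" "b \<in> V1" "a div 4 < b div 4"
  shows "up_set V1 V2 E b \<subseteq> up_set V1 V2 E a"
  using assms below_imp_block_le by (fastforce simp: up_set_def below_iff)

lemma top_rel_same_block:
  assumes "top_rel V1 V2 E a b"
  shows "a \<in> V2 \<and> b \<in> V2 \<and> a div 4 = b div 4"
proof -
  have "down_set V1 V2 E a \<noteq> {}" "down_set V1 V2 E b \<noteq> {}"
    using assms by (auto simp: top_rel_def)
  then have V2: "a \<in> V2" "b \<in> V2"
    by (auto simp: down_set_def below_iff)
  have "\<not> a div 4 < b div 4" "\<not> b div 4 < a div 4"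
    using down_set_mono[OF V2] down_set_mono[OF V2(2,1)] assms by (auto simp: top_rel_def)
  with V2 show ?thesis
    by simp
qed

lemma bot_rel_same_block:
  assumes "bot_rel V1 V2 E a b"
  shows "a \<in> V1 \<and> b \<in> V1 \<and> a div 4 = b div 4"
proof -
  have "up_set V1 V2 E a \<noteq> {}" "up_set V1 V2 E b \<noteq> {}"
    using assms by (auto simp: bot_rel_def)
  then have V1: "a \<in> V1" "b \<in> V1"
    by (auto simp: up_set_def below_iff)
  have "\<not> a div 4 < b div 4" "\<not> b div 4 < a div 4"
    using up_set_antimono[OF V1] up_set_antimono[OF V1(2,1)] assms by (auto simp: bot_rel_def)
  with V1 show ?thesis
    by simp
qed

lemma top_rel_upper_pair:
  assumes "i < length w" "w ! i = T12"
  shows "top_rel V1 V2 E (4 * i + 2) (4 * i + 3)"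
proof -
  have "4 * i \<in> down_set V1 V2 E (4 * i + 2) - down_set V1 V2 E (4 * i + 3)"
    "4 * i + 1 \<in> down_set V1 V2 E (4 * i + 3) - down_set V1 V2 E (4 * i + 2)"
    using tangle_block_vertices[OF assms]
    by (auto simp: down_set_def below_iff lower_pair_def upper_pair_def)
  then show ?thesis
    unfolding top_rel_def by blast
qed

lemma bot_rel_lower_pair:
  assumes "i < length w" "w ! i = T12"
  shows "bot_rel V1 V2 E (4 * i) (4 * i + 1)"
proof -
  have "4 * i + 2 \<in> up_set V1 V2 E (4 * i) - up_set V1 V2 E (4 * i + 1)"
    "4 * i + 3 \<in> up_set V1 V2 E (4 * i + 1) - up_set V1 V2 E (4 * i)"
    using tangle_block_vertices[OF assms]
    by (auto simp: up_set_def below_iff lower_pair_def upper_pair_def)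
  then show ?thesis
    unfolding bot_rel_def by blast
qed

lemma upper_pair_component:
  assumes "i < length w" "w ! i = T12"
  shows "component (V1 \<union> V2) (top_rel V1 V2 E) (4 * i + 2) = upper_pair i"
proof -
  let ?C = "component (V1 \<union> V2) (top_rel V1 V2 E) (4 * i + 2)"
  have sub: "upper_pair i \<subseteq> ?C"
    using tangle_block_vertices[OF assms] top_rel_upper_pair[OF assms]
    by (auto simp: upper_pair_def intro: self_in_component related_in_component)
  then have "2 \<le> card ?C"
    using card_mono[OF finite_component sub] by simp
  moreover have "(4 * i + 2) div 4 = i"
    by simp
  ultimately show ?thesis
    using component_eq_pair[OF top_rel_same_block V2_in_upper_pair card_upper_pair] by metis
qed

lemma lower_pair_component:
  assumes "i < length w" "w ! i = T12"
  shows "component (V1 \<union> V2) (bot_rel V1 V2 E) (4 * i) = lower_pair i"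
proof -
  let ?C = "component (V1 \<union> V2) (bot_rel V1 V2 E) (4 * i)"
  have sub: "lower_pair i \<subseteq> ?C"
    using tangle_block_vertices[OF assms] bot_rel_lower_pair[OF assms]
    by (auto simp: lower_pair_def intro: self_in_component related_in_component)
  then have "2 \<le> card ?C"
    using card_mono[OF finite_component sub] by simp
  moreover have "(4 * i) div 4 = i"
    by simp
  ultimately show ?thesis
    using component_eq_pair[OF bot_rel_same_block V1_in_lower_pair card_lower_pair] by metis
qed

lemma is_top_iff: "is_top V1 V2 E A \<longleftrightarrow> (\<exists>i < length w. w ! i = T12 \<and> A = upper_pair i)"
proof
  assume "is_top V1 V2 E A"
  then obtain a where a: "A = component (V1 \<union> V2) (top_rel V1 V2 E) a" and two: "2 \<le> card A"
    by (auto simp: is_top_def)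
  define i where "i = a div 4"
  have A: "A = upper_pair i"
    using component_eq_pair[OF top_rel_same_block V2_in_upper_pair card_upper_pair] two a
    by (simp add: i_def)
  then have "4 * i + 3 \<in> V1 \<union> V2"
    using a component_subset[of "V1 \<union> V2"] unfolding upper_pair_def by blast
  then have "4 * i + 3 \<in> V2"
    by (auto simp: V1_def)
  then have "i < length w \<and> w ! i = T12"
    by (auto simp: V2_def)
  with A show "\<exists>i < length w. w ! i = T12 \<and> A = upper_pair i"
    by blast
next
  assume "\<exists>i < length w. w ! i = T12 \<and> A = upper_pair i"
  then obtain i where "i < length w" "w ! i = T12" "A = upper_pair i"
    by blast
  moreover have "4 * i + 2 \<in> V2"
    using calculation tangle_block_vertices by (auto simp: upper_pair_def)
  ultimately show "is_top V1 V2 E A"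
    unfolding is_top_def using upper_pair_component by auto
qed

lemma is_bottom_iff: "is_bottom V1 V2 E B \<longleftrightarrow> (\<exists>i < length w. w ! i = T12 \<and> B = lower_pair i)"
proof
  assume "is_bottom V1 V2 E B"
  then obtain a where a: "B = component (V1 \<union> V2) (bot_rel V1 V2 E) a" and two: "2 \<le> card B"
    by (auto simp: is_bottom_def)
  define i where "i = a div 4"
  have B: "B = lower_pair i"
    using component_eq_pair[OF bot_rel_same_block V1_in_lower_pair card_lower_pair] two a
    by (simp add: i_def)
  then have "4 * i + 1 \<in> V1 \<union> V2"
    using a component_subset[of "V1 \<union> V2"] unfolding lower_pair_def by blast
  then have "4 * i + 1 \<in> V1"
    by (auto simp: V2_def)
  then have "i < length w \<and> w ! i = T12"
    by (auto simp: V1_def)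
  with B show "\<exists>i < length w. w ! i = T12 \<and> B = lower_pair i"
    by blast
next
  assume "\<exists>i < length w. w ! i = T12 \<and> B = lower_pair i"
  then obtain i where "i < length w" "w ! i = T12" "B = lower_pair i"
    by blast
  moreover have "4 * i \<in> V1"
    using calculation tangle_block_vertices by (auto simp: lower_pair_def)
  ultimately show "is_bottom V1 V2 E B"
    unfolding is_bottom_def using lower_pair_component by auto
qed

lemma tangles_eq: "tangles V1 V2 E = {(upper_pair i, lower_pair i) | i. i < length w \<and> w ! i = T12}"
proof (intro set_eqI iffI)
  fix p assume "p \<in> tangles V1 V2 E"
  then obtain A B where p: "p = (A, B)" "is_top V1 V2 E A" "is_bottom V1 V2 E B" "matched V1 V2 E A B"
    by (auto simp: tangles_def)
  obtain i where i: "i < length w" "w ! i = T12" "A = upper_pair i"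
    using p(2) by (auto simp: is_top_iff)
  obtain k where k: "k < length w" "w ! k = T12" "B = lower_pair k"
    using p(3) by (auto simp: is_bottom_iff)
  from p(4) obtain a1 a2 b1 b2 where m: "a1 \<in> A" "a2 \<in> A" "b1 \<in> B" "b2 \<in> B"
      "a1 \<noteq> a2" "b1 \<noteq> b2" "below b1 a1" "below b2 a2" "incomparable V1 V2 E a1 a2"
      "incomparable V1 V2 E b1 b2" "incomparable V1 V2 E b1 a2" "incomparable V1 V2 E b2 a1"
    unfolding matched_def by blast
  have blocks: "a1 div 4 = i" "a2 div 4 = i" "b1 div 4 = k"
    using m(1-3) i(3) k(3) by (auto simp: upper_pair_def lower_pair_def)
  have "a2 \<in> V2" "b1 \<in> V1"
    using m(2,3) i k tangle_block_vertices by blast+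
  then have "\<not> k < i"
    using m(11) blocks by (auto simp: incomparable_def below_iff)
  moreover have "k \<le> i"
    using below_imp_block_le[OF m(7)] blocks by simp
  ultimately have "k = i"
    by simp
  with p i k show "p \<in> {(upper_pair i, lower_pair i) | i. i < length w \<and> w ! i = T12}"
    by auto
next
  fix p assume "p \<in> {(upper_pair i, lower_pair i) | i. i < length w \<and> w ! i = T12}"
  then obtain i where i: "i < length w" "w ! i = T12" and p: "p = (upper_pair i, lower_pair i)"
    by blast
  have "4 * i \<in> V1" "4 * i + 1 \<in> V1" "4 * i + 2 \<in> V2" "4 * i + 3 \<in> V2"
    using tangle_block_vertices[OF i] by (auto simp: upper_pair_def lower_pair_def)
  then have witnesses: "below (4 * i) (4 * i + 2)" "below (4 * i + 1) (4 * i + 3)"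
    "incomparable V1 V2 E (4 * i + 2) (4 * i + 3)" "incomparable V1 V2 E (4 * i) (4 * i + 1)"
    "incomparable V1 V2 E (4 * i) (4 * i + 3)" "incomparable V1 V2 E (4 * i + 1) (4 * i + 2)"
    using V1_V2_disjoint by (auto simp: incomparable_def below_iff)
  have "matched V1 V2 E (upper_pair i) (lower_pair i)"
    unfolding matched_def upper_pair_def lower_pair_def
    by (rule bexI[of _ "4 * i + 2"], rule bexI[of _ "4 * i + 3"], rule bexI[of _ "4 * i"],
        rule bexI[of _ "4 * i + 1"]) (use witnesses in simp_all)
  then show "p \<in> tangles V1 V2 E"
    using i p by (auto simp: tangles_def is_top_iff is_bottom_iff)
qed

lemma tangle_vertices_iff:
  assumes "v \<in> V1 \<union> V2"
  shows "v \<in> tangle_vertices V1 V2 E \<longleftrightarrow> w ! (v div 4) = T12"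
proof -
  have "v \<in> tangle_vertices V1 V2 E
      \<longleftrightarrow> (\<exists>i. i < length w \<and> w ! i = T12 \<and> v \<in> upper_pair i \<union> lower_pair i)"
    by (auto simp: tangle_vertices_def tangles_eq)
  moreover have "v \<in> upper_pair i \<union> lower_pair i \<longleftrightarrow> i = v div 4" for i
    using assms V1_in_lower_pair V2_in_upper_pair by (auto simp: upper_pair_def lower_pair_def)
  ultimately show ?thesis
    using assms vertex_block_less_length by auto
qed

lemma V1_nbhd_neq:
  assumes "no_adjacent_clones w" "x \<in> V1" "y \<in> V1" "w ! (x div 4) \<noteq> T12" "w ! (y div 4) \<noteq> T12"
    and "x div 4 < y div 4"
  shows "nbhd V1 V2 E x \<noteq> nbhd V1 V2 E y"
proof -
  define i where "i = x div 4"
  have x: "w ! i = C1" "x = 4 * i" and y: "w ! (y div 4) = C1" "y = 4 * (y div 4)"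
    using V1_clone_block assms(2-5) by (auto simp: i_def)
  have len: "y div 4 < length w"
    using assms(3) vertex_block_less_length by blast
  have next_letter: "w ! Suc i \<noteq> C1"
    using assms(1,6) x(1) len unfolding no_adjacent_clones_def successively_iff_nth i_def
    by (metis less_trans_Suc letter.distinct(3) Suc_lessI)
  then have "Suc i \<noteq> y div 4"
    using y(1) by auto
  with next_letter have next_block: "Suc i < y div 4" "4 * Suc i + 2 \<in> V2"
    using assms(6) len by (auto simp: i_def V2_def)
  then have "below x (4 * Suc i + 2)" "\<not> below y (4 * Suc i + 2)" "\<not> below (4 * Suc i + 2) y"
    using assms(2,3) x(2) y(2) V1_V2_disjoint by (auto simp: below_iff)
  then show ?thesis
    using next_block(2) by (auto simp: nbhd_def set_eq_iff)
qed

lemma V2_nbhd_neq: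
  assumes "no_adjacent_clones w" "x \<in> V2" "y \<in> V2" "w ! (x div 4) \<noteq> T12" "w ! (y div 4) \<noteq> T12"
    and "x div 4 < y div 4"
  shows "nbhd V1 V2 E x \<noteq> nbhd V1 V2 E y"
proof -
  define j where "j = y div 4 - 1"
  have j: "Suc j = y div 4"
    using assms(6) by (simp add: j_def)
  have x: "w ! (x div 4) = C2" "x = 4 * (x div 4) + 2" and y: "w ! Suc j = C2" "y = 4 * Suc j + 2"
    using V2_clone_block assms(2-5) j by auto
  have len: "Suc j < length w"
    using assms(3) vertex_block_less_length j by auto
  have prev_letter: "w ! j \<noteq> C2"
    using assms(1) y(1) len unfolding no_adjacent_clones_def successively_iff_nth
    by (metis letter.distinct(5))
  then have "x div 4 \<noteq> j"
    using x(1) by auto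
  with prev_letter have prev_block: "x div 4 < j" "4 * j \<in> V1"
    using assms(6) len j by (auto simp: V1_def)
  then have "below (4 * j) y" "\<not> below (4 * j) x" "\<not> below x (4 * j)"
    using assms(2,3) x(2) y(2) V1_V2_disjoint by (auto simp: below_iff)
  then show ?thesis
    using prev_block(2) by (auto simp: nbhd_def set_eq_iff)
qed

lemma clone_like_subsingleton:
  assumes "no_adjacent_clones w" "clone_like V1 V2 E X" "x \<in> X" "y \<in> X"
  shows "x = y"
proof -
  have V: "x \<in> V1 \<union> V2" "y \<in> V1 \<union> V2" and colour: "x \<in> V1 \<longleftrightarrow> y \<in> V1"
    and nbhd: "nbhd V1 V2 E x = nbhd V1 V2 E y"
    using assms(2-4) V1_V2_disjoint unfolding clone_like_def by blast+
  have clone: "w ! (x div 4) \<noteq> T12" "w ! (y div 4) \<noteq> T12"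
    using assms(2-4) tangle_vertices_iff V unfolding clone_like_def by blast+
  have "x div 4 = y div 4"
  proof (rule ccontr)
    assume "x div 4 \<noteq> y div 4"
    then consider "x div 4 < y div 4" | "y div 4 < x div 4"
      by linarith
    then show False
      using V colour nbhd clone V1_nbhd_neq[OF assms(1)] V2_nbhd_neq[OF assms(1)]
      by cases (metis UnE)+
  qed
  then show ?thesis
    using V colour clone V1_clone_block V2_clone_block by (metis UnE)
qed

lemma clone_set_iff:
  assumes "no_adjacent_clones w"
  shows "clone_set V1 V2 E X \<longleftrightarrow> (\<exists>v \<in> V1 \<union> V2. w ! (v div 4) \<noteq> T12 \<and> X = {v})"
proof
  assume X: "clone_set V1 V2 E X"
  then obtain v where "v \<in> X"
    by (auto simp: clone_set_def)
  moreover have "clone_like V1 V2 E X"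
    using X by (simp add: clone_set_def)
  ultimately show "\<exists>v \<in> V1 \<union> V2. w ! (v div 4) \<noteq> T12 \<and> X = {v}"
    using clone_like_subsingleton[OF assms] tangle_vertices_iff unfolding clone_like_def
    by blast
next
  assume "\<exists>v \<in> V1 \<union> V2. w ! (v div 4) \<noteq> T12 \<and> X = {v}"
  then obtain v where v: "v \<in> V1 \<union> V2" "w ! (v div 4) \<noteq> T12" and X: "X = {v}"
    by blast
  then have "clone_like V1 V2 E X"
    using tangle_vertices_iff by (auto simp: clone_like_def)
  then show "clone_set V1 V2 E X"
    using clone_like_subsingleton[OF assms] X by (auto simp: clone_set_def)
qed

lemma block_part_verts:
  assumes "i < length w"
  shows "part_verts (block_part i) \<noteq> {}" "v \<in> part_verts (block_part i) \<Longrightarrow> v div 4 = i"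
  by (cases "w ! i"; auto simp: block_part_def upper_pair_def lower_pair_def)+

lemma block_part_in_parts:
  assumes "no_adjacent_clones w" "i < length w"
  shows "block_part i \<in> parts V1 V2 E"
proof (cases "w ! i")
  case C1
  then have "4 * i \<in> V1"
    using assms(2) by (simp add: V1_def)
  with C1 have "clone_set V1 V2 E {4 * i}"
    unfolding clone_set_iff[OF assms(1)] by (intro bexI[of _ "4 * i"]) auto
  with C1 show ?thesis
    by (simp add: block_part_def parts_def)
next
  case C2
  then have "4 * i + 2 \<in> V2"
    using assms(2) by (simp add: V2_def)
  with C2 have "clone_set V1 V2 E {4 * i + 2}"
    unfolding clone_set_iff[OF assms(1)] by (intro bexI[of _ "4 * i + 2"]) auto
  with C2 show ?thesis
    by (simp add: block_part_def parts_def)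
next
  case T12
  then have "(upper_pair i, lower_pair i) \<in> tangles V1 V2 E"
    using assms(2) by (auto simp: tangles_eq)
  with T12 show ?thesis
    by (force simp: block_part_def parts_def)
qed

lemma parts_eq:
  assumes "no_adjacent_clones w"
  shows "parts V1 V2 E = block_part ` {..<length w}"
proof (intro equalityI subsetI)
  fix P assume "P \<in> parts V1 V2 E"
  then consider (clone) X where "P = Clone X" "clone_set V1 V2 E X"
    | (tangle) A B where "P = Tangle A B" "(A, B) \<in> tangles V1 V2 E"
    by (auto simp: parts_def)
  then show "P \<in> block_part ` {..<length w}"
  proof cases
    case clone
    then obtain v where v: "v \<in> V1 \<union> V2" "w ! (v div 4) \<noteq> T12" "P = Clone {v}"
      using clone_set_iff[OF assms] by blast
    define i where "i = v div 4"
    have "w ! i = C1 \<and> v = 4 * i \<or> w ! i = C2 \<and> v = 4 * i + 2"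
      using v V1_clone_block V2_clone_block unfolding i_def by blast
    then have "P = block_part i"
      using v(3) by (auto simp: block_part_def)
    moreover have "i < length w"
      using v(1) vertex_block_less_length by (simp add: i_def)
    ultimately show ?thesis
      by blast
  next
    case tangle
    then obtain i where "i < length w" "w ! i = T12" "P = Tangle (upper_pair i) (lower_pair i)"
      by (auto simp: tangles_eq)
    then show ?thesis
      by (intro rev_image_eqI[of i]) (simp_all add: block_part_def)
  qed
qed (use block_part_in_parts[OF assms] in auto)

lemma compatible_listing_block_listing:
  assumes "no_adjacent_clones w"
  shows "compatible_listing V1 V2 E block_listing"
  unfolding compatible_listing_def
proof (intro conjI allI impI ballI)
  have "inj_on block_part {..<length w}"
  proof (rule inj_onI)
    fix i j assume "i \<in> {..<length w}" "j \<in> {..<length w}" "block_part i = block_part j"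
    moreover obtain v where "v \<in> part_verts (block_part i)"
      using block_part_verts(1) calculation(1) by blast
    ultimately show "i = j"
      using block_part_verts(2) by (metis lessThan_iff)
  qed
  then show "distinct block_listing"
    by (simp add: block_listing_def distinct_map atLeast_upt)
  show "set block_listing = parts V1 V2 E"
    by (simp add: block_listing_def parts_eq[OF assms] atLeast_upt)
  fix i j a b
  assume "i < length block_listing" "j < length block_listing" "i \<noteq> j"
    and "a \<in> part_verts (block_listing ! i) \<inter> V1" "b \<in> part_verts (block_listing ! j) \<inter> V2"
  then have "a div 4 = i" "b div 4 = j" "i \<noteq> j" "a \<in> V1" "b \<in> V2"
    using block_part_verts by (auto simp: block_listing_def)
  moreover have "(a + 2) div 4 = a div 4"
    using V1_in_lower_pair[OF \<open>a \<in> V1\<close>] by (auto simp: lower_pair_def)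
  ultimately show "below a b \<longleftrightarrow> i < j"
    by (auto simp: below_iff)
qed

lemma map_part_letter_block_listing: "map (part_letter V1) block_listing = w"
proof (rule nth_equalityI)
  fix i assume "i < length (map (part_letter V1) block_listing)"
  then have "i < length w"
    by (simp add: block_listing_def)
  moreover have "4 * i + 2 \<notin> V1"
    by (simp add: V1_def)
  ultimately show "map (part_letter V1) block_listing ! i = w ! i"
    by (cases "w ! i") (auto simp: block_listing_def block_part_def V1_def)
qed (simp add: block_listing_def)

end

lemma no_adjacent_clones_skeleton_word:
  assumes "no_adjacent_clones w"
  shows "w \<in> skeleton_words"
proof -
  interpret word_realisation w .
  have "E \<subseteq> V1 \<times> V2"
    by (auto simp: E_def)
  then show ?thesis
    unfolding skeleton_words_def mem_Collect_eq
    using finite_V1 finite_V2 V1_V2_disjoint compatible_listing_block_listing[OF assms]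
      map_part_letter_block_listing
    by (intro exI[of _ V1] exI[of _ V2] exI[of _ E] exI[of _ block_listing]) simp
qed

lemma skeleton_words_eq: "skeleton_words = {w. no_adjacent_clones w}"
  using skeleton_word_no_adjacent_clones no_adjacent_clones_skeleton_word by blast

theorem lemma4p1:
  "\<exists>\<epsilon> > 0. \<forall>c1 c2 t :: real. \<bar>c1\<bar> < \<epsilon> \<and> \<bar>c2\<bar> < \<epsilon> \<and> \<bar>t\<bar> < \<epsilon> \<longrightarrow>
     ((\<lambda>w. c1 ^ count_list w C1 * c2 ^ count_list w C2 * t ^ count_list w T12)
        has_sum (1 / (1 - c1 / (1 + c1) - c2 / (1 + c2) - t))) skeleton_words"
proof (intro exI[of _ "1 / 3"] conjI allI impI)
  fix c1 c2 t :: real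
  assume "\<bar>c1\<bar> < 1 / 3 \<and> \<bar>c2\<bar> < 1 / 3 \<and> \<bar>t\<bar> < 1 / 3"
  then have "(word_weight c1 c2 t has_sum (1 / (1 - c1 / (1 + c1) - c2 / (1 + c2) - t)))
      {w. no_adjacent_clones w}"
    by (intro has_sum_word_weight_no_adjacent_clones) auto
  then show "((\<lambda>w. c1 ^ count_list w C1 * c2 ^ count_list w C2 * t ^ count_list w T12)
      has_sum (1 / (1 - c1 / (1 + c1) - c2 / (1 + c2) - t))) skeleton_words"
    by (simp add: skeleton_words_eq word_weight_def[abs_def])
qed simp

end
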